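(* Let $q$ be a prime power, let $b\in\mathbb{F}_q[x]$ be a permutation polynomial of $\mathbb{F}_q$, let $n$ be a positive integer, and let $h, k\in\mathbb{F}_q[x]$ be such that $\gcd\left(h(x),\frac{x^n-1}{x-1}\right)=1$ and $k(\mathbb{F}_q)\subseteq\mathbb{F}_q^*$. Then for every polynomial $f\in\mathbb{F}_{q^n}[x]$ with $T_n[f](x)\equiv b(x)-h(1)\cdot k(x)\cdot x\pmod{x^q-x}$, the polynomial $$\mathcal{P}_{b,f,h,k,n}(x)=f(\mathrm{Tr}_{q^n/q}(x))+k(\mathrm{Tr}_{q^n/q}(x))\cdot L_h(x)$$ is a permutation polynomial of $\mathbb{F}_{q^n}$.
   Context: For $u(x)=\sum_{i=0}^m a_i x^i\in\mathbb{F}_q[x]$, its linearized $q$-associate is $L_u(x)=\sum_{i=0}^m a_i x^{q^i}$. $\mathrm{Tr}_{q^n/q}(x)=x+x^q+\cdots+x^{q^{n-1}}$. For $f(x)=\sum_{i=0}^d a_i x^i\in\mathbb{F}_{q^n}[x]$, $T_n[f](x)=\sum_{i=0}^d\mathrm{Tr}_{q^n/q}(a_i)x^i\in\mathbb{F}_q[x]$. A permutation polynomial of a finite field is a polynomial inducing a bijection of it. *)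

theory Defs
  imports "HOL-Computational_Algebra.Computational_Algebra"
begin

text \<open>The subfield F_q of a finite field 'a with q^n elements: the fixed points of x ~> x^q.\<close>
definition subfield_q :: "nat \<Rightarrow> 'a::{finite,field} set" where
  "subfield_q q = {x. x ^ q = x}"

definition trace_qn :: "nat \<Rightarrow> nat \<Rightarrow> 'a::{finite,field} \<Rightarrow> 'a" where
  "trace_qn q n x = (\<Sum>i<n. x ^ (q ^ i))"

definition lin_assoc :: "nat \<Rightarrow> 'a::{finite,field} poly \<Rightarrow> 'a \<Rightarrow> 'a" where
  "lin_assoc q u x = (\<Sum>i\<le>degree u. coeff u i * x ^ (q ^ i))"

definition trace_poly :: "nat \<Rightarrow> nat \<Rightarrow> 'a::{finite,field} poly \<Rightarrow> 'a poly" where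
  "trace_poly q n f = map_poly (trace_qn q n) f"

definition poly_over :: "'a::{finite,field} set \<Rightarrow> 'a poly \<Rightarrow> bool" where
  "poly_over K p \<longleftrightarrow> (\<forall>i. coeff p i \<in> K)"

end

theory Submission
  imports Defs "HOL-Algebra.FiniteProduct"
begin

(* Tr is F_q-linear and Tr (L_h x) = h(1) Tr x, so by the congruence for T_n[f] the trace of
   P(x) is b(Tr x). As b permutes F_q, P(x) = P(y) forces Tr x = Tr y, and then, k having no
   zero on F_q, L_h x = L_h y. Now Tr = L_Phi for Phi = (x^n - 1)/(x - 1), and L_(g h) = L_g o L_h
   for h over F_q, so a Bezout relation u h + v Phi = 1 shows that L_h and Tr have no common
   nonzero kernel element; hence x = y. *)

lemma of_nat_card_finite_ring: "of_nat (card (UNIV :: 'a::{finite,comm_ring_1} set)) = (0::'a)"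
proof -
  define G :: "'a monoid" where "G = \<lparr>carrier = UNIV, monoid.mult = (+), one = 0\<rparr>"
  interpret G: comm_group G
  proof (rule comm_groupI)
    show "\<exists>y\<in>carrier G. y \<otimes>\<^bsub>G\<^esub> z = \<one>\<^bsub>G\<^esub>" for z
      by (intro bexI[of _ "- z"]) (auto simp: G_def)
  qed (auto simp: G_def add_ac)
  have "(1::'a) [^]\<^bsub>G\<^esub> m = of_nat m" for m
    by (induction m) (simp_all add: G_def)
  then show ?thesis
    using G.power_order_eq_one[of 1] by (simp add: G_def)
qed

lemma finite_field_power_card:
  fixes x :: "'a::{finite,field}"
  shows "x ^ card (UNIV :: 'a set) = x"
proof (cases "x = 0")
  case True
  then show ?thesis
    using finite_UNIV_card_ge_0[where 'a='a] by (simp add: power_0_left)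
next
  case False
  define G :: "'a monoid" where "G = \<lparr>carrier = UNIV - {0}, monoid.mult = (*), one = 1\<rparr>"
  interpret G: comm_group G
  proof (rule comm_groupI)
    show "\<exists>y\<in>carrier G. y \<otimes>\<^bsub>G\<^esub> z = \<one>\<^bsub>G\<^esub>" if "z \<in> carrier G" for z
      using that by (intro bexI[of _ "inverse z"]) (auto simp: G_def)
  qed (auto simp: G_def mult_ac)
  have "y [^]\<^bsub>G\<^esub> m = y ^ m" for y :: 'a and m
    by (induction m) (simp_all add: G_def)
  then have "x ^ (card (UNIV :: 'a set) - 1) = 1"
    using G.power_order_eq_one[of x] False by (simp add: G_def card_Diff_singleton)
  then have "x ^ Suc (card (UNIV :: 'a set) - 1) = x"
    by simp
  then show ?thesis
    using finite_UNIV_card_ge_0[where 'a='a] by simp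
qed

lemma prime_CHAR_finite_field: "prime CHAR('a::{finite,field})"
  by (intro prime_CHAR_semidom finite_imp_CHAR_pos) simp

lemma CHAR_finite_field_eq:
  assumes "prime p" "card (UNIV :: 'a::{finite,field} set) = p ^ m" "m > 0"
  shows "CHAR('a) = p"
proof -
  have "CHAR('a) dvd p ^ m"
    using of_nat_card_finite_ring[where 'a='a] assms(2) by (metis of_nat_eq_0_iff_char_dvd)
  then have "CHAR('a) dvd p"
    using prime_CHAR_finite_field[where 'a='a] prime_dvd_power by blast
  then show ?thesis
    using prime_CHAR_finite_field[where 'a='a] assms(1) by (simp add: primes_dvd_imp_eq)
qed

lemma frobenius_power_add:
  assumes "q = CHAR('a::{finite,field}) ^ e"
  shows "(x + y :: 'a) ^ (q ^ i) = x ^ (q ^ i) + y ^ (q ^ i)"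
  by (rule freshmans_dream'[OF prime_CHAR_finite_field, of _ "e * i"])
     (simp add: assms power_mult)

lemma frobenius_power_sum:
  assumes "q = CHAR('a::{finite,field}) ^ e"
  shows "sum (g :: _ \<Rightarrow> 'a) A ^ (q ^ i) = (\<Sum>j\<in>A. g j ^ (q ^ i))"
  by (rule freshmans_dream_sum'[OF prime_CHAR_finite_field, of _ "e * i"])
     (simp add: assms power_mult)

lemma CHAR_power_pos: "q = CHAR('a::{finite,field}) ^ e \<Longrightarrow> q > 0"
  using prime_CHAR_finite_field[where 'a='a] by (simp add: prime_gt_0_nat)

lemma subfield_q_power_eq:
  assumes "c \<in> subfield_q q"
  shows "c ^ (q ^ j) = c"
proof (induction j)
  case (Suc j)
  have "c ^ (q ^ Suc j) = (c ^ q) ^ (q ^ j)"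
    by (simp add: power_mult mult.commute)
  with assms Suc show ?case
    by (simp add: subfield_q_def)
qed simp

lemma poly_over_pCons: "poly_over K (pCons a p) \<longleftrightarrow> a \<in> K \<and> poly_over K p"
  unfolding poly_over_def by (metis coeff_pCons_0 coeff_pCons_Suc not0_implies_Suc)

lemma lin_assoc_eq_sum:
  assumes "degree p < N"
  shows "lin_assoc q p z = (\<Sum>i<N. coeff p i * z ^ (q ^ i))"
  unfolding lin_assoc_def lessThan_Suc_atMost[symmetric]
  by (rule sum.mono_neutral_left) (use assms in \<open>auto simp: coeff_eq_0\<close>)

lemma lin_assoc_0 [simp]: "lin_assoc q 0 z = 0"
  by (simp add: lin_assoc_def)

lemma lin_assoc_1 [simp]: "lin_assoc q 1 z = z"
  by (simp add: lin_assoc_def)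

lemma lin_assoc_add: "lin_assoc q (p + r) z = lin_assoc q p z + lin_assoc q r z"
proof -
  define N where "N = Suc (max (degree p) (degree r))"
  have "degree (p + r) < N"
    using degree_add_le_max[of p r] unfolding N_def by linarith
  then show ?thesis
    by (subst (1 2 3) lin_assoc_eq_sum[where N = N]) (auto simp: N_def sum.distrib algebra_simps)
qed

lemma lin_assoc_smult: "lin_assoc q (smult a p) z = a * lin_assoc q p z"
  by (simp add: lin_assoc_def sum_distrib_left mult.assoc)

lemma lin_assoc_pCons: "lin_assoc q (pCons a p) z = a * z + lin_assoc q p (z ^ q)"
proof -
  define N where "N = Suc (degree p)"
  have "degree (pCons a p) < Suc N"
    using degree_pCons_le[of a p] unfolding N_def by linarith
  then have "lin_assoc q (pCons a p) z = (\<Sum>i<Suc N. coeff (pCons a p) i * z ^ (q ^ i))"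
    by (rule lin_assoc_eq_sum)
  also have "\<dots> = a * z + (\<Sum>i<N. coeff p i * z ^ (q ^ Suc i))"
    by (subst sum.lessThan_Suc_shift) simp
  also have "(\<Sum>i<N. coeff p i * z ^ (q ^ Suc i)) = (\<Sum>i<N. coeff p i * (z ^ q) ^ (q ^ i))"
    by (simp add: power_mult)
  also have "\<dots> = lin_assoc q p (z ^ q)"
    by (rule lin_assoc_eq_sum[symmetric]) (simp add: N_def)
  finally show ?thesis .
qed

lemma lin_assoc_add_right:
  assumes "q = CHAR('a::{finite,field}) ^ e"
  shows "lin_assoc q g (x + y :: 'a) = lin_assoc q g x + lin_assoc q g y"
  unfolding lin_assoc_def by (simp add: frobenius_power_add[OF assms] algebra_simps sum.distrib)

lemma lin_assoc_diff_right:
  assumes "q = CHAR('a::{finite,field}) ^ e"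
  shows "lin_assoc q g (x - y :: 'a) = lin_assoc q g x - lin_assoc q g y"
  using lin_assoc_add_right[OF assms, of g "x - y" y] by simp

lemma lin_assoc_zero_right:
  assumes "q = CHAR('a::{finite,field}) ^ e"
  shows "lin_assoc q g (0 :: 'a) = 0"
  using lin_assoc_diff_right[OF assms, of g 0 0] by simp

lemma lin_assoc_power_q:
  assumes "q = CHAR('a::{finite,field}) ^ e" "poly_over (subfield_q q) h"
  shows "lin_assoc q h (z :: 'a) ^ q = lin_assoc q h (z ^ q)"
proof -
  have "lin_assoc q h z ^ (q ^ 1) = (\<Sum>i\<le>degree h. (coeff h i * z ^ (q ^ i)) ^ (q ^ 1))"
    unfolding lin_assoc_def by (rule frobenius_power_sum[OF assms(1)])
  also have "\<dots> = (\<Sum>i\<le>degree h. coeff h i * (z ^ q) ^ (q ^ i))"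
    using assms(2)
    by (simp add: poly_over_def subfield_q_def power_mult_distrib mult.commute flip: power_mult)
  finally show ?thesis
    by (simp add: lin_assoc_def)
qed

lemma lin_assoc_mult:
  assumes "q = CHAR('a::{finite,field}) ^ e" "poly_over (subfield_q q) h"
  shows "lin_assoc q (g * h) (z :: 'a) = lin_assoc q g (lin_assoc q h z)"
proof (induction g arbitrary: z)
  case (pCons a g)
  have "lin_assoc q (pCons a g * h) z = a * lin_assoc q h z + lin_assoc q g (lin_assoc q h (z ^ q))"
    by (simp add: lin_assoc_add lin_assoc_smult lin_assoc_pCons pCons.IH)
  then show ?case
    by (simp add: lin_assoc_pCons lin_assoc_power_q[OF assms])
qed simp

lemma trace_add:
  assumes "q = CHAR('a::{finite,field}) ^ e"
  shows "trace_qn q n (x + y :: 'a) = trace_qn q n x + trace_qn q n y"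
  unfolding trace_qn_def by (simp add: frobenius_power_add[OF assms] sum.distrib)

lemma trace_zero:
  assumes "q = CHAR('a::{finite,field}) ^ e"
  shows "trace_qn q n (0 :: 'a) = 0"
  using CHAR_power_pos[OF assms] by (simp add: trace_qn_def power_0_left)

lemma trace_mult_subfield_q:
  assumes "c \<in> subfield_q q"
  shows "trace_qn q n (c * w) = c * trace_qn q n w"
  unfolding trace_qn_def
  by (simp add: power_mult_distrib subfield_q_power_eq[OF assms] sum_distrib_left)

lemma trace_power_q:
  assumes "(x :: 'a::{finite,field}) ^ (q ^ n) = x"
  shows "trace_qn q n (x ^ q) = trace_qn q n x"
proof -
  have "x + trace_qn q n (x ^ q) = x + (\<Sum>i<n. x ^ (q ^ Suc i))"
    unfolding trace_qn_def by (simp add: power_mult mult.commute)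
  also have "\<dots> = (\<Sum>i<Suc n. x ^ (q ^ i))"
    by (subst sum.lessThan_Suc_shift) simp
  also have "\<dots> = trace_qn q n x + x"
    using assms by (simp add: trace_qn_def)
  finally show ?thesis
    by simp
qed

lemma trace_in_subfield_q:
  assumes "q = CHAR('a::{finite,field}) ^ e" "(x :: 'a) ^ (q ^ n) = x"
  shows "trace_qn q n x \<in> subfield_q q"
proof -
  have "trace_qn q n x ^ (q ^ 1) = (\<Sum>i<n. (x ^ (q ^ i)) ^ (q ^ 1))"
    unfolding trace_qn_def by (rule frobenius_power_sum[OF assms(1)])
  also have "\<dots> = trace_qn q n (x ^ q)"
    unfolding trace_qn_def by (simp add: mult.commute flip: power_mult)
  finally show ?thesis
    using trace_power_q[OF assms(2)] by (simp add: subfield_q_def)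
qed

lemma trace_poly_eval:
  assumes "q = CHAR('a::{finite,field}) ^ e" "(t :: 'a) \<in> subfield_q q"
  shows "trace_qn q n (poly f t) = poly (trace_poly q n f) t"
proof (induction f)
  case (pCons a f)
  then show ?case
    by (simp add: trace_poly_def map_poly_pCons trace_zero[OF assms(1)] trace_add[OF assms(1)]
                  trace_mult_subfield_q[OF assms(2)])
qed (simp add: trace_poly_def trace_zero[OF assms(1)])

lemma trace_lin_assoc:
  assumes "q = CHAR('a::{finite,field}) ^ e" "\<And>y :: 'a. y ^ (q ^ n) = y"
    and "poly_over (subfield_q q) h"
  shows "trace_qn q n (lin_assoc q h (x :: 'a)) = poly h 1 * trace_qn q n x"
  using assms(3)
proof (induction h arbitrary: x)
  case (pCons a h)
  then have "a \<in> subfield_q q" "poly_over (subfield_q q) h"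
    by (simp_all add: poly_over_pCons)
  with pCons.IH show ?case
    by (simp add: lin_assoc_pCons trace_add[OF assms(1)] trace_mult_subfield_q
                  trace_power_q[OF assms(2)] algebra_simps)
qed (simp add: trace_zero[OF assms(1)])

lemma poly_eq_on_subfield_q_if_dvd:
  assumes "(monom 1 q - [:0, 1:]) dvd (p - r)" "t \<in> subfield_q q"
  shows "poly p t = poly r t"
proof -
  obtain s where s: "p - r = (monom 1 q - [:0, 1:]) * s"
    using assms(1) by (elim dvdE)
  have "poly (monom 1 q - [:0, 1:]) t = 0"
    using assms(2) by (simp add: subfield_q_def poly_monom)
  then have "poly (p - r) t = 0"
    by (simp only: s poly_mult) simp
  then show ?thesis
    by simp
qed

lemma div_X_minus_1_eq_sum_monom:
  "(monom 1 n - 1) div [:-1, 1:] = (\<Sum>i<n. monom (1::'a::field) i)"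
proof -
  have X: "monom (1::'a) i = [:0, 1:] ^ i" for i
    by (simp add: monom_altdef)
  have "monom (1::'a) n - 1 = ([:0, 1:] - 1) * (\<Sum>i<n. [:0, 1:] ^ i)"
    by (simp only: X power_diff_1_eq)
  also have "[:0, 1:] - 1 = [:-1, 1::'a:]"
    by (simp add: one_pCons)
  finally have "monom (1::'a) n - 1 = [:-1, 1:] * (\<Sum>i<n. monom 1 i)"
    by (simp only: X)
  then show ?thesis
    by (simp only:) (rule nonzero_mult_div_cancel_left, simp)
qed

lemma coeff_sum_monom: "coeff (\<Sum>i<n. monom (1::'a::field) i) j = (if j < n then 1 else 0)"
  by (simp add: coeff_sum coeff_monom)

lemma poly_over_sum_monom:
  "q > 0 \<Longrightarrow> poly_over (subfield_q q) (\<Sum>i<n. monom (1::'a::{finite,field}) i)"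
  by (simp add: poly_over_def subfield_q_def coeff_sum_monom)

lemma lin_assoc_sum_monom: "lin_assoc q (\<Sum>i<n. monom 1 i) z = trace_qn q n z"
proof -
  have "degree (\<Sum>i<n. monom (1::'a) i) < Suc n"
    using degree_le[of n "\<Sum>i<n. monom (1::'a) i"] by (simp add: coeff_sum_monom)
  then show ?thesis
    by (simp add: lin_assoc_eq_sum coeff_sum_monom trace_qn_def)
qed

lemma coprime_imp_bezout:
  fixes a b :: "'a::euclidean_ring"
  assumes "coprime a b"
  shows "\<exists>u v. u * a + v * b = 1"
  using assms
proof (induction "euclidean_size b" arbitrary: a b rule: less_induct)
  case less
  show ?case
  proof (cases "b = 0")
    case True
    then have "is_unit a"
      using less.prems by simp
    then have "(1 div a) * a + 0 * b = 1"
      by simp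
    then show ?thesis
      by blast
  next
    case False
    then have "coprime b (a mod b)"
      using less.prems by (simp add: coprime_commute)
    then obtain u v where "u * b + v * (a mod b) = 1"
      using less.hyps[OF mod_size_less[OF False]] by blast
    then have "v * a + (u - v * (a div b)) * b = 1"
      by (simp add: minus_div_mult_eq_mod[symmetric] algebra_simps)
    then show ?thesis
      by blast
  qed
qed

lemma lin_assoc_coprime_kernel:
  assumes "q = CHAR('a::{finite,field}) ^ e" "coprime h g"
    and "poly_over (subfield_q q) h" "poly_over (subfield_q q) g"
    and "lin_assoc q h z = 0" "lin_assoc q g (z :: 'a) = 0"
  shows "z = 0"
proof -
  obtain u v where "u * h + v * g = 1"
    using coprime_imp_bezout[OF assms(2)] by blast
  then have "z = lin_assoc q (u * h + v * g) z"
    by simp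
  also have "\<dots> = lin_assoc q u (lin_assoc q h z) + lin_assoc q v (lin_assoc q g z)"
    by (simp add: lin_assoc_add lin_assoc_mult[OF assms(1,3)] lin_assoc_mult[OF assms(1,4)])
  finally show ?thesis
    by (simp add: assms(5,6) lin_assoc_zero_right[OF assms(1)])
qed

lemma lin_assoc_trace_inj:
  assumes "q = CHAR('a::{finite,field}) ^ e" "coprime h ((monom 1 n - 1) div [:-1, 1:])"
    and "poly_over (subfield_q q) h"
    and "lin_assoc q h x = lin_assoc q h y" "trace_qn q n x = trace_qn q n (y :: 'a)"
  shows "x = y"
proof -
  have "x - y = 0"
  proof (rule lin_assoc_coprime_kernel[OF assms(1)])
    show "coprime h (\<Sum>i<n. monom 1 i)"
      using assms(2) by (simp add: div_X_minus_1_eq_sum_monom)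
    show "poly_over (subfield_q q) (\<Sum>i<n. monom 1 i)"
      by (rule poly_over_sum_monom[OF CHAR_power_pos[OF assms(1)]])
    show "lin_assoc q h (x - y) = 0"
      using assms(4) by (simp add: lin_assoc_diff_right[OF assms(1)])
    have "trace_qn q n (x - y) = 0"
      using trace_add[OF assms(1), of n "x - y" y] assms(5) by simp
    then show "lin_assoc q (\<Sum>i<n. monom 1 i) (x - y) = 0"
      by (simp add: lin_assoc_sum_monom)
  qed (rule assms(3))
  then show ?thesis
    by simp
qed

lemma trace_eq_poly_b_of_trace:
  assumes "q = CHAR('a::{finite,field}) ^ e" "\<And>y :: 'a. y ^ (q ^ n) = y"
    and "poly_over (subfield_q q) h" "poly k (trace_qn q n x) \<in> subfield_q q"
    and "(monom 1 q - [:0, 1:]) dvd (trace_poly q n f - (b - smult (poly h 1) (k * [:0, 1:])))"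
  shows "trace_qn q n (poly f (trace_qn q n x) + poly k (trace_qn q n x) * lin_assoc q h x)
           = poly b (trace_qn q n (x :: 'a))"
proof -
  define t where "t = trace_qn q n x"
  have t: "t \<in> subfield_q q"
    unfolding t_def by (rule trace_in_subfield_q[OF assms(1,2)])
  have kt: "poly k t \<in> subfield_q q"
    unfolding t_def by (rule assms(4))
  have "trace_qn q n (poly f t + poly k t * lin_assoc q h x)
          = poly (trace_poly q n f) t + poly k t * (poly h 1 * t)"
    by (simp add: trace_add[OF assms(1)] trace_poly_eval[OF assms(1) t] trace_mult_subfield_q[OF kt]
                  trace_lin_assoc[OF assms(1,2,3)] flip: t_def)
  also have "\<dots> = poly b t"
    using poly_eq_on_subfield_q_if_dvd[OF assms(5) t] by (simp add: algebra_simps)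
  finally show ?thesis
    by (simp add: t_def)
qed

theorem theorem3p5:
  fixes q n :: nat
    and b h k f :: "'a::{finite,field} poly"
  assumes q_pp: "\<exists>p e. prime p \<and> e > 0 \<and> q = p ^ e"
    and n_pos: "n > 0"
    and card: "card (UNIV :: 'a set) = q ^ n"
    and b_over: "poly_over (subfield_q q) b"
    and h_over: "poly_over (subfield_q q) h"
    and k_over: "poly_over (subfield_q q) k"
    and b_perm: "bij_betw (poly b) (subfield_q q) (subfield_q q)"
    and h_coprime: "coprime h ((monom 1 n - 1) div [:-1, 1:])"
    and k_nonzero: "poly k ` subfield_q q \<subseteq> subfield_q q - {0}"
    and f_cong: "(monom 1 q - [:0, 1:]) dvd
                   (trace_poly q n f - (b - smult (poly h 1) (k * [:0, 1:])))"
  shows "bij (\<lambda>x. poly f (trace_qn q n x) + poly k (trace_qn q n x) * lin_assoc q h x)"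
proof -
  obtain p e where pe: "prime p" "e > 0" "q = p ^ e"
    using q_pp by blast
  have q: "q = CHAR('a) ^ e"
    using CHAR_finite_field_eq[where 'a='a, of p "e * n"] pe n_pos card by (simp add: power_mult)
  have power_q_n: "y ^ (q ^ n) = y" for y :: 'a
    using finite_field_power_card[of y] card by simp
  let ?Tr = "trace_qn q n"
  let ?P = "\<lambda>x. poly f (?Tr x) + poly k (?Tr x) * lin_assoc q h x"
  have Tr_in: "?Tr x \<in> subfield_q q" for x :: 'a
    by (rule trace_in_subfield_q[OF q power_q_n])
  have "inj ?P"
  proof (rule injI)
    fix x y
    assume P_eq: "?P x = ?P y"
    have "poly b (?Tr x) = poly b (?Tr y)"
      using arg_cong[OF P_eq, of ?Tr] k_nonzero Tr_in
      by (simp add: trace_eq_poly_b_of_trace[OF q power_q_n h_over _ f_cong] image_subset_iff)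
    then have Tr_eq: "?Tr x = ?Tr y"
      using bij_betw_imp_inj_on[OF b_perm] Tr_in by (auto dest: inj_onD)
    moreover have "poly k (?Tr x) \<noteq> 0"
      using k_nonzero Tr_in by auto
    then have "lin_assoc q h x = lin_assoc q h y"
      using P_eq Tr_eq by simp
    ultimately show "x = y"
      using lin_assoc_trace_inj[OF q h_coprime h_over] by blast
  qed
  then show ?thesis
    by (simp add: bij_def finite_UNIV_inj_surj)
qed

end
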